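(* Let $n\geq 3$, let $\Omega\subset\mathbb{R}^n$ be a bounded simple rotationally symmetric domain along the $x_n$ axis, and let $f(x,u)\in C^{1,1}(\Omega,\mathbb{R})$ be convex with respect to $u$. If $u$ and $v$ are positive stable solutions of $$-\Delta w=f(x,w)\ \text{in}\ \Omega,\qquad w=0\ \text{on}\ \partial\Omega,$$ then $u=v$ in $\Omega$; i.e., a positive stable solution of this problem is unique.
   Context: A domain $\Omega\subset\mathbb{R}^n$ is simple rotationally symmetric along the $x_n$ axis if (1) it is symmetric with respect to $x_n=0$; (2) it is invariant under every $A\in O(n)$ fixing the $x_n$ axis; (3) for each $i=1,\dots,n$, any segment joining two points of $\Omega$ and parallel to the $x_i$ axis lies in $\Omega$. A solution $u$ is stable if $\int_\Omega|\nabla\phi|^2dx-\int_\Omega f'(x,u)\phi^2dx>0$ for every nonzero $\phi\in H^1_0(\Omega)$, where $f'$ is the derivative of $f$ with respect to its last variable; equivalently, the first Dirichlet eigenvalue of $-\Delta-f'(x,u)$ in $\Omega$ is positive. *)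

theory Defs
  imports "HOL-Analysis.Analysis"
begin

definition partial :: "(real^'n \<Rightarrow> real) \<Rightarrow> 'n \<Rightarrow> real^'n \<Rightarrow> real" where
  "partial u i x = deriv (\<lambda>t. u (x + t *\<^sub>R axis i 1)) 0"

definition grad :: "(real^'n \<Rightarrow> real) \<Rightarrow> real^'n \<Rightarrow> real^'n" where
  "grad u x = (\<chi> i. partial u i x)"

definition laplacian :: "(real^'n \<Rightarrow> real) \<Rightarrow> real^'n \<Rightarrow> real" where
  "laplacian u x = (\<Sum>i\<in>UNIV. partial (partial u i) i x)"

definition C2_on :: "(real^'n) set \<Rightarrow> (real^'n \<Rightarrow> real) \<Rightarrow> bool" where
  "C2_on S u \<longleftrightarrow> continuous_on S u
     \<and> (\<forall>i. \<forall>x\<in>S. (\<lambda>t. u (x + t *\<^sub>R axis i 1)) differentiable (at 0))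
     \<and> (\<forall>i. continuous_on S (partial u i))
     \<and> (\<forall>i j. \<forall>x\<in>S. (\<lambda>t. partial u i (x + t *\<^sub>R axis j 1)) differentiable (at 0))
     \<and> (\<forall>i j. continuous_on S (partial (partial u i) j))"

definition Cc1 :: "(real^'n) set \<Rightarrow> (real^'n \<Rightarrow> real) \<Rightarrow> bool" where
  "Cc1 S \<psi> \<longleftrightarrow> (\<forall>x. \<psi> differentiable (at x))
     \<and> (\<forall>i. continuous_on UNIV (partial \<psi> i))
     \<and> compact (closure {x. \<psi> x \<noteq> 0}) \<and> closure {x. \<psi> x \<noteq> 0} \<subseteq> S"

text \<open>(phi, g) belongs to H^1_0(S) with weak gradient g: phi is the H^1(S)-limit of
  compactly supported C^1 functions (the completion definition of H^1_0).\<close>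
definition H10 :: "(real^'n) set \<Rightarrow> (real^'n \<Rightarrow> real) \<Rightarrow> (real^'n \<Rightarrow> real^'n) \<Rightarrow> bool" where
  "H10 S \<phi> g \<longleftrightarrow> \<phi> \<in> borel_measurable lebesgue \<and> g \<in> borel_measurable lebesgue
     \<and> (\<exists>\<psi>::nat \<Rightarrow> real^'n \<Rightarrow> real. (\<forall>k. Cc1 S (\<psi> k))
        \<and> (\<lambda>k. \<integral>\<^sup>+ x. indicator S x * ennreal ((\<psi> k x - \<phi> x)\<^sup>2) \<partial>lebesgue) \<longlonglongrightarrow> 0
        \<and> (\<lambda>k. \<integral>\<^sup>+ x. indicator S x * ennreal ((norm (grad (\<psi> k) x - g x))\<^sup>2) \<partial>lebesgue) \<longlonglongrightarrow> 0)"

definition C11_nonlin :: "(real^'n) set \<Rightarrow> (real^'n \<Rightarrow> real \<Rightarrow> real) \<Rightarrow> bool" where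
  "C11_nonlin S f \<longleftrightarrow> (\<exists>Df. (\<forall>p \<in> S \<times> UNIV. ((\<lambda>q. f (fst q) (snd q)) has_derivative Df p) (at p))
     \<and> (\<forall>M::real. \<exists>L. \<forall>p \<in> S \<times> {-M..M}. \<forall>q \<in> S \<times> {-M..M}.
          onorm (\<lambda>h. Df p h - Df q h) \<le> L * dist p q))"

definition fu :: "(real^'n \<Rightarrow> real \<Rightarrow> real) \<Rightarrow> real^'n \<Rightarrow> real \<Rightarrow> real" where
  "fu f x t = deriv (\<lambda>s. f x s) t"

definition simple_rot_sym :: "'n \<Rightarrow> (real^'n) set \<Rightarrow> bool" where
  "simple_rot_sym k \<Omega> \<longleftrightarrow>
     (\<forall>x. x \<in> \<Omega> \<longleftrightarrow> (\<chi> i. if i = k then - x $ i else x $ i) \<in> \<Omega>)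
   \<and> (\<forall>A. orthogonal_transformation A \<and> A (axis k 1) = axis k 1 \<longrightarrow> (\<forall>x\<in>\<Omega>. A x \<in> \<Omega>))
   \<and> (\<forall>i. \<forall>x\<in>\<Omega>. \<forall>y\<in>\<Omega>. (\<forall>j. j \<noteq> i \<longrightarrow> x $ j = y $ j) \<longrightarrow> closed_segment x y \<subseteq> \<Omega>)"

definition is_solution :: "(real^'n) set \<Rightarrow> (real^'n \<Rightarrow> real \<Rightarrow> real) \<Rightarrow> (real^'n \<Rightarrow> real) \<Rightarrow> bool" where
  "is_solution S f w \<longleftrightarrow> C2_on S w \<and> continuous_on (closure S) w
     \<and> (\<forall>x\<in>S. - laplacian w x = f x (w x))
     \<and> (\<forall>x\<in>frontier S. w x = 0)"

definition stable :: "(real^'n) set \<Rightarrow> (real^'n \<Rightarrow> real \<Rightarrow> real) \<Rightarrow> (real^'n \<Rightarrow> real) \<Rightarrow> bool" where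
  "stable S f w \<longleftrightarrow> (\<forall>\<phi> g. H10 S \<phi> g \<and> \<not> (AE x in lebesgue. x \<in> S \<longrightarrow> \<phi> x = 0) \<longrightarrow>
      (LINT x:S|lebesgue. (norm (g x))\<^sup>2) - (LINT x:S|lebesgue. fu f x (w x) * (\<phi> x)\<^sup>2) > 0)"

end

theory Submission
  imports Defs
begin

(* Put w = u - v and a(x) = f_u(x, u(x)). Convexity of f in its last variable gives
   f(x, v) >= f(x, u) + a (v - u), hence -Delta w <= a w in Omega, and w = 0 on the boundary.
   With the C^1 cutoffs G_d(t) = (t - d)^2 / t for t > d (and 0 otherwise), G_d(w) is a
   compactly supported C^1 function; integrating -Delta w <= a w against it and letting d -> 0
   shows that w^+ belongs to H^1_0(Omega), being the limit of the G_d(w), and that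
   int |grad w^+|^2 <= int a (w^+)^2. Stability of u forces w^+ = 0, i.e. u <= v, and exchanging
   u and v gives u = v. *)

definition has_partial_derivative :: "(real^'n \<Rightarrow> real) \<Rightarrow> 'n \<Rightarrow> real^'n \<Rightarrow> real \<Rightarrow> bool" where
  "has_partial_derivative F i y D \<longleftrightarrow> ((\<lambda>t. F (y + t *\<^sub>R axis i 1)) has_real_derivative D) (at 0)"

lemma has_partial_derivative_unique:
  "has_partial_derivative F i y D \<Longrightarrow> has_partial_derivative F i y D' \<Longrightarrow> D = D'"
  unfolding has_partial_derivative_def using DERIV_unique by blast

lemma partial_eqI: "has_partial_derivative F i y D \<Longrightarrow> partial F i y = D"
  unfolding has_partial_derivative_def partial_def by (rule DERIV_imp_deriv)

lemma has_partial_derivative_iff_differentiable: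
  "has_partial_derivative F i y (partial F i y) \<longleftrightarrow> (\<lambda>t. F (y + t *\<^sub>R axis i 1)) differentiable (at 0)"
  unfolding has_partial_derivative_def partial_def by (rule DERIV_deriv_iff_real_differentiable)

lemma has_partial_derivative_diff:
  "has_partial_derivative F i y D \<Longrightarrow> has_partial_derivative G i y E \<Longrightarrow>
    has_partial_derivative (\<lambda>x. F x - G x) i y (D - E)"
  unfolding has_partial_derivative_def by (rule DERIV_diff)

lemma has_partial_derivative_mult:
  "has_partial_derivative F i y D \<Longrightarrow> has_partial_derivative G i y E \<Longrightarrow>
    has_partial_derivative (\<lambda>x. F x * G x) i y (D * G y + F y * E)"
  unfolding has_partial_derivative_def by (drule (1) DERIV_mult) (simp add: mult.commute)

lemma has_partial_derivative_compose:
  "(g has_real_derivative g') (at (F y)) \<Longrightarrow> has_partial_derivative F i y D \<Longrightarrow>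
    has_partial_derivative (\<lambda>x. g (F x)) i y (g' * D)"
  unfolding has_partial_derivative_def
  by (rule DERIV_chain2[where f = g and g = "\<lambda>t. F (y + t *\<^sub>R axis i 1)"]) simp_all

lemma has_partial_derivative_along_line:
  assumes "has_partial_derivative F i (y + s *\<^sub>R axis i 1) D"
  shows "((\<lambda>t. F (y + t *\<^sub>R axis i 1)) has_real_derivative D) (at s)"
proof -
  have "((\<lambda>t. F (y + (t + s) *\<^sub>R axis i 1)) has_real_derivative D) (at 0)"
    using assms unfolding has_partial_derivative_def by (simp add: algebra_simps scaleR_add_left)
  then show ?thesis using DERIV_shift[of "\<lambda>t. F (y + t *\<^sub>R axis i 1)" D 0 s] by simp
qed

lemma has_partial_derivative_transform_open:
  assumes "has_partial_derivative F i y D" "open S" "y \<in> S" "\<And>x. x \<in> S \<Longrightarrow> F x = G x"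
  shows "has_partial_derivative G i y D"
proof -
  have "open ((\<lambda>t::real. y + t *\<^sub>R axis i 1) -` S)"
    using assms(2) by (intro open_vimage continuous_intros) auto
  from assms(1)[unfolded has_partial_derivative_def] this
  show ?thesis unfolding has_partial_derivative_def
    by (rule has_field_derivative_transform_within_open) (use assms(3,4) in auto)
qed

lemma has_partial_derivative_outside_support:
  assumes "closed K" "y \<notin> K" "\<And>z. z \<notin> K \<Longrightarrow> F z = 0"
  shows "has_partial_derivative F i y 0"
  by (rule has_partial_derivative_transform_open[where F = "\<lambda>_. 0" and S = "- K"])
     (use assms in \<open>auto simp: has_partial_derivative_def\<close>)

lemma C2_on_has_partial_derivative:
  assumes "C2_on S u" "y \<in> S"
  shows "has_partial_derivative u i y (partial u i y)"
    and "has_partial_derivative (partial u i) j y (partial (partial u i) j y)"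
  using assms by (auto simp: C2_on_def has_partial_derivative_iff_differentiable)

lemma C2_on_diff:
  assumes S: "open S" and u: "C2_on S u" and v: "C2_on S v"
  shows "C2_on S (\<lambda>x. u x - v x)"
    and "\<And>x. x \<in> S \<Longrightarrow> laplacian (\<lambda>x. u x - v x) x = laplacian u x - laplacian v x"
proof -
  note has_partial = C2_on_has_partial_derivative
  have has_partial_diff: "has_partial_derivative (\<lambda>y. u y - v y) i x (partial u i x - partial v i x)"
    if "x \<in> S" for i x
    using has_partial_derivative_diff[OF has_partial(1)[OF u that] has_partial(1)[OF v that]] .
  have partial_diff: "partial (\<lambda>y. u y - v y) i x = partial u i x - partial v i x" if "x \<in> S" for i x
    using partial_eqI[OF has_partial_diff[OF that]] .
  have has_partial2_diff: "has_partial_derivative (partial (\<lambda>y. u y - v y) i) j x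
      (partial (partial u i) j x - partial (partial v i) j x)" if "x \<in> S" for i j x
    by (rule has_partial_derivative_transform_open[OF
          has_partial_derivative_diff[OF has_partial(2)[OF u that] has_partial(2)[OF v that]] S that])
      (simp add: partial_diff)
  have partial2_diff: "partial (partial (\<lambda>y. u y - v y) i) j x
      = partial (partial u i) j x - partial (partial v i) j x" if "x \<in> S" for i j x
    using partial_eqI[OF has_partial2_diff[OF that]] .
  have "continuous_on S (\<lambda>x. u x - v x)"
    using u v by (intro continuous_intros) (auto simp: C2_on_def)
  moreover have "continuous_on S (partial (\<lambda>y. u y - v y) i)" for i
  proof (rule continuous_on_eq)
    show "continuous_on S (\<lambda>x. partial u i x - partial v i x)"
      using u v by (intro continuous_intros) (auto simp: C2_on_def)
  qed (simp add: partial_diff)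
  moreover have "continuous_on S (partial (partial (\<lambda>y. u y - v y) i) j)" for i j
  proof (rule continuous_on_eq)
    show "continuous_on S (\<lambda>x. partial (partial u i) j x - partial (partial v i) j x)"
      using u v by (intro continuous_intros) (auto simp: C2_on_def)
  qed (simp add: partial2_diff)
  moreover have "(\<lambda>t. u (x + t *\<^sub>R axis i 1) - v (x + t *\<^sub>R axis i 1)) differentiable (at 0)"
    if "x \<in> S" for i x
    using has_partial_diff[OF that, of i] unfolding partial_diff[OF that, symmetric] has_partial_derivative_iff_differentiable .
  moreover have "(\<lambda>t. partial (\<lambda>y. u y - v y) i (x + t *\<^sub>R axis j 1)) differentiable (at 0)"
    if "x \<in> S" for i j x
    using has_partial2_diff[OF that, of i j] unfolding partial2_diff[OF that, symmetric] has_partial_derivative_iff_differentiable .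
  ultimately show "C2_on S (\<lambda>x. u x - v x)"
    unfolding C2_on_def by blast
  show "laplacian (\<lambda>x. u x - v x) x = laplacian u x - laplacian v x" if "x \<in> S" for x
    using partial2_diff[OF that] by (simp add: laplacian_def sum_subtractf)
qed

lemma coordinate_increment_bound:
  fixes F :: "real^'n \<Rightarrow> real"
  assumes "\<And>s. s \<in> closed_segment 0 t \<Longrightarrow>
      has_partial_derivative F j (z + s *\<^sub>R axis j 1) (P (z + s *\<^sub>R axis j 1))"
    and "\<And>s. s \<in> closed_segment 0 t \<Longrightarrow> \<bar>P (z + s *\<^sub>R axis j 1) - c\<bar> \<le> B"
  shows "\<bar>F (z + t *\<^sub>R axis j 1) - F z - t * c\<bar> \<le> B * \<bar>t\<bar>"
proof -
  let ?g = "\<lambda>s. F (z + s *\<^sub>R axis j 1) - c * s"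
  have "norm (?g t - ?g 0) \<le> B * norm (t - 0)"
  proof (rule field_differentiable_bound[where f' = "\<lambda>s. P (z + s *\<^sub>R axis j 1) - c"])
    fix s assume s: "s \<in> closed_segment 0 t"
    have "(?g has_real_derivative P (z + s *\<^sub>R axis j 1) - c) (at s)"
      by (rule DERIV_diff[OF has_partial_derivative_along_line[OF assms(1)[OF s]] DERIV_cmult_Id])
    then show "(?g has_field_derivative P (z + s *\<^sub>R axis j 1) - c) (at s within closed_segment 0 t)"
      by (rule has_field_derivative_at_within)
    show "norm (P (z + s *\<^sub>R axis j 1) - c) \<le> B"
      using assms(2)[OF s] by simp
  qed simp_all
  then show ?thesis by (simp add: mult.commute[of c])
qed

lemma continuous_on_ball_bound:
  fixes g :: "'a::metric_space \<Rightarrow> real"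
  assumes "open S" "x \<in> S" "continuous_on S g" "\<epsilon> > 0"
  obtains r where "r > 0" "ball x r \<subseteq> S" "\<And>y. y \<in> ball x r \<Longrightarrow> \<bar>g y - g x\<bar> \<le> \<epsilon>"
proof -
  obtain r1 where "r1 > 0" and r1: "\<And>y. y \<in> S \<Longrightarrow> dist y x < r1 \<Longrightarrow> \<bar>g y - g x\<bar> < \<epsilon>"
    using assms(2-4) unfolding continuous_on_iff dist_real_def by blast
  obtain r2 where "r2 > 0" and r2: "ball x r2 \<subseteq> S"
    using assms(1,2) open_contains_ball by blast
  show ?thesis
  proof (rule that[of "min r1 r2"])
    fix y assume "y \<in> ball x (min r1 r2)"
    with r1 r2 show "\<bar>g y - g x\<bar> \<le> \<epsilon>" by (force simp: dist_commute)
  qed (use \<open>r1 > 0\<close> \<open>r2 > 0\<close> r2 in auto)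
qed

lemma increment_drop_coordinate_bound:
  fixes F :: "real^'n \<Rightarrow> real"
  assumes F: "\<And>y. y \<in> ball x r \<Longrightarrow> has_partial_derivative F j y (P y)"
    and P: "\<And>y. y \<in> ball x r \<Longrightarrow> \<bar>P y - P x\<bar> \<le> B" and h: "norm h < r"
  shows "\<bar>F (x + h) - F (x + (\<chi> k. if k = j then 0 else h$k)) - h$j * P x\<bar> \<le> B * \<bar>h$j\<bar>"
proof -
  define h' where "h' = (\<chi> k. if k = j then 0 else h$k)"
  have near: "x + h' + s *\<^sub>R axis j 1 \<in> ball x r" if "s \<in> closed_segment 0 (h$j)" for s
  proof -
    have "\<bar>s\<bar> \<le> \<bar>h$j\<bar>"
      using that by (auto simp: closed_segment_eq_real_ivl split: if_splits)
    then have "norm (h' + s *\<^sub>R axis j 1) \<le> norm h"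
      by (intro norm_le_componentwise_cart) (simp add: h'_def axis_def)
    moreover have "dist x (x + h' + s *\<^sub>R axis j 1) = norm (h' + s *\<^sub>R axis j 1)"
      by (metis add.assoc add_diff_cancel_left' dist_commute dist_norm)
    ultimately show ?thesis using h unfolding mem_ball by linarith
  qed
  have bound: "\<bar>F (x + h' + h$j *\<^sub>R axis j 1) - F (x + h') - h$j * P x\<bar> \<le> B * \<bar>h$j\<bar>"
    by (rule coordinate_increment_bound[where P = P]) (use near F P in blast)+
  have "x + h' + h$j *\<^sub>R axis j 1 = x + h"
    by (simp add: h'_def vec_eq_iff axis_def)
  with bound show ?thesis by (simp only: h'_def[symmetric])
qed

lemma continuous_partials_linear_approx:
  fixes F :: "real^'n \<Rightarrow> real"
  assumes S: "open S" "x \<in> S"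
    and P: "\<And>i y. y \<in> S \<Longrightarrow> has_partial_derivative F i y (P i y)" "\<And>i. continuous_on S (P i)"
    and "finite I" "\<epsilon> > 0"
  shows "\<exists>\<delta>>0. \<forall>h. (\<forall>j. j \<notin> I \<longrightarrow> h$j = 0) \<and> norm h < \<delta> \<longrightarrow>
           \<bar>F (x + h) - F x - (\<Sum>i\<in>I. h$i * P i x)\<bar> \<le> \<epsilon> * norm h"
  using \<open>finite I\<close> \<open>\<epsilon> > 0\<close>
proof (induction I arbitrary: \<epsilon> rule: finite_induct)
  case empty
  show ?case
  proof (intro exI[of _ 1] conjI allI impI)
    fix h :: "real^'n"
    assume "(\<forall>j. j \<notin> {} \<longrightarrow> h$j = 0) \<and> norm h < 1"
    then have "h = 0" by (simp add: vec_eq_iff)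
    then show "\<bar>F (x + h) - F x - (\<Sum>i\<in>{}. h$i * P i x)\<bar> \<le> \<epsilon> * norm h" by simp
  qed simp
next
  case (insert j I)
  obtain \<delta> where "\<delta> > 0" and IH: "\<And>h. (\<forall>j. j \<notin> I \<longrightarrow> h$j = 0) \<Longrightarrow> norm h < \<delta> \<Longrightarrow>
      \<bar>F (x + h) - F x - (\<Sum>i\<in>I. h$i * P i x)\<bar> \<le> \<epsilon>/2 * norm h"
    using insert.IH[of "\<epsilon>/2"] insert.prems by auto
  obtain r where "r > 0" and r: "ball x r \<subseteq> S" "\<And>y. y \<in> ball x r \<Longrightarrow> \<bar>P j y - P j x\<bar> \<le> \<epsilon>/2"
    using continuous_on_ball_bound[OF S P(2) half_gt_zero[OF insert.prems]] by blast
  show ?case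
  proof (intro exI[of _ "min \<delta> r"] conjI allI impI)
    show "min \<delta> r > 0" using \<open>\<delta> > 0\<close> \<open>r > 0\<close> by simp
    fix h :: "real^'n"
    assume h: "(\<forall>i. i \<notin> insert j I \<longrightarrow> h$i = 0) \<and> norm h < min \<delta> r"
    define h' where "h' = (\<chi> k. if k = j then 0 else h$k)"
    have step_j: "\<bar>F (x + h) - F (x + h') - h$j * P j x\<bar> \<le> \<epsilon>/2 * \<bar>h$j\<bar>"
      unfolding h'_def using h r P(1)
      by (intro increment_drop_coordinate_bound[where r = r]) auto
    have h'_small: "norm h' \<le> norm h"
      by (rule norm_le_componentwise_cart) (simp add: h'_def)
    have "\<forall>i. i \<notin> I \<longrightarrow> h'$i = 0" using h by (simp add: h'_def)
    moreover have "norm h' < \<delta>" using h'_small h by simp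
    ultimately have "\<bar>F (x + h') - F x - (\<Sum>i\<in>I. h'$i * P i x)\<bar> \<le> \<epsilon>/2 * norm h'"
      by (rule IH)
    also have "\<dots> \<le> \<epsilon>/2 * norm h" using h'_small insert.prems by simp
    also have "(\<Sum>i\<in>I. h'$i * P i x) = (\<Sum>i\<in>I. h$i * P i x)"
      using insert.hyps(2) by (intro sum.cong) (auto simp: h'_def)
    finally have step_I: "\<bar>F (x + h') - F x - (\<Sum>i\<in>I. h$i * P i x)\<bar> \<le> \<epsilon>/2 * norm h" .
    have "\<epsilon>/2 * \<bar>h$j\<bar> \<le> \<epsilon>/2 * norm h"
      using component_le_norm_cart[of h j] insert.prems by simp
    moreover have "(\<Sum>i\<in>insert j I. h$i * P i x) = h$j * P j x + (\<Sum>i\<in>I. h$i * P i x)"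
      using insert.hyps by simp
    ultimately show "\<bar>F (x + h) - F x - (\<Sum>i\<in>insert j I. h$i * P i x)\<bar> \<le> \<epsilon> * norm h"
      using step_j step_I by linarith
  qed
qed

lemma has_derivative_continuous_partials:
  fixes F :: "real^'n \<Rightarrow> real"
  assumes "open S" "x \<in> S"
    and "\<And>i y. y \<in> S \<Longrightarrow> has_partial_derivative F i y (P i y)" "\<And>i. continuous_on S (P i)"
  shows "(F has_derivative (\<lambda>h. \<Sum>i\<in>UNIV. h$i * P i x)) (at x)"
  unfolding has_derivative_at_alt
proof (intro conjI allI impI)
  show "bounded_linear (\<lambda>h::real^'n. \<Sum>i\<in>UNIV. h$i * P i x)"
    by (intro bounded_linear_sum bounded_linear_mult_left[THEN bounded_linear_compose]
        bounded_linear_vec_nth)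
  fix \<epsilon> :: real assume "\<epsilon> > 0"
  then obtain \<delta> where "\<delta> > 0" and \<delta>: "\<And>h. norm h < \<delta> \<Longrightarrow>
      \<bar>F (x + h) - F x - (\<Sum>i\<in>UNIV. h$i * P i x)\<bar> \<le> \<epsilon> * norm h"
    using continuous_partials_linear_approx[OF assms, of UNIV \<epsilon>] by auto
  show "\<exists>d>0. \<forall>y. norm (y - x) < d \<longrightarrow>
      norm (F y - F x - (\<Sum>i\<in>UNIV. (y - x)$i * P i x)) \<le> \<epsilon> * norm (y - x)"
    using \<delta>[of "_ - x"] \<open>\<delta> > 0\<close> by (intro exI[of _ \<delta>]) auto
qed

lemma integrable_continuous_compact_support:
  fixes F :: "'a::euclidean_space \<Rightarrow> real"
  assumes "continuous_on UNIV F" "compact K" "\<And>y. y \<notin> K \<Longrightarrow> F y = 0"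
  shows "integrable lborel F"
proof -
  have "integrable lborel (\<lambda>x. indicator K x *\<^sub>R F x)"
    using assms(2) continuous_on_subset[OF assms(1)] by (rule borel_integrable_compact) simp
  moreover have "(\<lambda>x. indicator K x *\<^sub>R F x) = F"
    using assms(3) by (auto simp: indicator_def fun_eq_iff)
  ultimately show ?thesis by simp
qed

lemma lborel_integral_translate:
  fixes F :: "'a::euclidean_space \<Rightarrow> real" and c :: 'a
  assumes "integrable lborel F"
  shows "integrable lborel (\<lambda>y. F (y + c))"
    and "integral\<^sup>L lborel (\<lambda>y. F (y + c)) = integral\<^sup>L lborel F"
proof -
  have F: "F \<in> borel_measurable borel"
    using borel_measurable_integrable[OF assms] by simp
  have "integrable (distr lborel borel ((+) c)) F"
    by (simp add: lborel_distr_plus assms)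
  then have "integrable lborel (\<lambda>y. F (c + y))"
    by (subst (asm) integrable_distr_eq) (use F in auto)
  then show "integrable lborel (\<lambda>y. F (y + c))" by (simp add: add.commute)
  have "integral\<^sup>L lborel F = integral\<^sup>L (distr lborel borel ((+) c)) F"
    by (simp add: lborel_distr_plus)
  also have "\<dots> = integral\<^sup>L lborel (\<lambda>y. F (c + y))"
    by (rule integral_distr) (use F in auto)
  finally show "integral\<^sup>L lborel (\<lambda>y. F (y + c)) = integral\<^sup>L lborel F"
    by (simp add: add.commute)
qed

lemma difference_quotient_tendsto:
  fixes g :: "real \<Rightarrow> real"
  assumes "(g has_real_derivative D) (at 0)" "filterlim h (at 0) sequentially"
  shows "(\<lambda>m. (g (h m) - g 0) / h m) \<longlonglongrightarrow> D"
proof -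
  have "((\<lambda>t. (g t - g 0) / (t - 0)) \<longlongrightarrow> D) (at 0)"
    using assms(1) unfolding has_field_derivative_iff by simp
  from filterlim_compose[OF this assms(2)] show ?thesis by simp
qed

lemma difference_quotient_bound:
  fixes F D :: "real^'n \<Rightarrow> real"
  assumes FD: "\<And>y. has_partial_derivative F i y (D y)" and B: "\<And>y. \<bar>D y\<bar> \<le> B"
    and F0: "\<And>y. y \<notin> K \<Longrightarrow> F y = 0" and h: "0 < h" "h \<le> 1"
  shows "\<bar>(F (y + h *\<^sub>R axis i 1) - F y) / h\<bar> \<le> B * indicator {x + z |x z. x \<in> K \<and> z \<in> cball 0 1} y"
proof (cases "y \<in> {x + z |x z. x \<in> K \<and> z \<in> cball 0 1}")
  case True
  have "\<bar>F (y + h *\<^sub>R axis i 1) - F y - h * 0\<bar> \<le> B * \<bar>h\<bar>"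
    using FD B by (intro coordinate_increment_bound) auto
  then show ?thesis using True h by (simp add: divide_le_eq abs_divide)
next
  case False
  then have "y \<notin> K"
    by (metis (mono_tags, lifting) add.right_neutral centre_in_cball mem_Collect_eq zero_le_one)
  moreover have "y + h *\<^sub>R axis i 1 \<notin> K"
  proof
    assume "y + h *\<^sub>R axis i 1 \<in> K"
    moreover have "- (h *\<^sub>R axis i 1) \<in> cball (0 :: real^'n) 1" using h by simp
    moreover have "y = (y + h *\<^sub>R axis i 1) + - (h *\<^sub>R axis i 1)" by simp
    ultimately have "y \<in> {x + z |x z. x \<in> K \<and> z \<in> cball 0 1}" by blast
    with False show False by contradiction
  qed
  ultimately show ?thesis using F0 False by simp
qed

lemma integral_partial_derivative_compact_support:
  fixes F D :: "real^'n \<Rightarrow> real"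
  assumes F: "continuous_on UNIV F" and D: "continuous_on UNIV D" and K: "compact K"
    and F0: "\<And>y. y \<notin> K \<Longrightarrow> F y = 0" and FD: "\<And>y. has_partial_derivative F i y (D y)"
  shows "integral\<^sup>L lborel D = 0"
proof -
  let ?e = "axis i 1 :: real^'n"
  define h :: "nat \<Rightarrow> real" where "h m = inverse (real (Suc m))" for m
  define q where "q m y = (F (y + h m *\<^sub>R ?e) - F y) / h m" for m y
  define K' where "K' = {x + y |x y. x \<in> K \<and> y \<in> cball (0::real^'n) 1}"
  have "compact K'" unfolding K'_def by (intro compact_sums K compact_cball)
  have h: "0 < h m" "h m \<le> 1" for m
    by (simp_all add: h_def inverse_le_1_iff)
  have D0: "D y = 0" if "y \<notin> K" for y
    using has_partial_derivative_unique[OF FD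
        has_partial_derivative_outside_support[OF compact_imp_closed[OF K] that F0]] .
  obtain B where B: "\<And>y. \<bar>D y\<bar> \<le> B"
  proof -
    have "bounded (D ` K)"
      using K D by (intro compact_imp_bounded compact_continuous_image) (auto intro: continuous_on_subset)
    then obtain B where "\<And>y. y \<in> K \<Longrightarrow> \<bar>D y\<bar> \<le> B" by (auto simp: bounded_iff)
    with D0 show ?thesis by (intro that[of "max B 0"]) (metis abs_zero max.coboundedI1 max.cobounded2)
  qed
  have Fint: "integrable lborel F"
    by (rule integrable_continuous_compact_support[OF F K F0])
  have [measurable]: "F \<in> borel_measurable borel" "D \<in> borel_measurable borel"
    by (intro borel_measurable_continuous_onI F D)+
  have "integral\<^sup>L lborel (q m) = 0" for m
    using lborel_integral_translate[OF Fint, of "h m *\<^sub>R ?e"] Fint unfolding q_def by simp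
  moreover have "(\<lambda>m. integral\<^sup>L lborel (q m)) \<longlonglongrightarrow> integral\<^sup>L lborel D"
  proof (rule integral_dominated_convergence[where w = "\<lambda>y. B * indicator K' y"])
    show "q m \<in> borel_measurable lborel" for m unfolding q_def by measurable
    show "integrable lborel (\<lambda>y. B * indicator K' y)"
      using \<open>compact K'\<close> emeasure_compact_finite[OF \<open>compact K'\<close>]
      by (intro integrable_mult_right integrable_real_indicator) (auto simp: borel_compact)
    have "filterlim h (at 0) sequentially"
      unfolding h_def using h(1)
      by (intro filterlim_atI LIMSEQ_inverse_real_of_nat) (simp add: h_def)
    from difference_quotient_tendsto[OF FD[unfolded has_partial_derivative_def] this]
    show "AE y in lborel. (\<lambda>m. q m y) \<longlonglongrightarrow> D y"
      by (simp add: q_def)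
    show "AE y in lborel. norm (q m y) \<le> B * indicator K' y" for m
      unfolding q_def K'_def real_norm_def
      by (intro AE_I2 difference_quotient_bound[OF FD B F0 h])
  qed simp
  ultimately show ?thesis by (simp add: LIMSEQ_const_iff)
qed

lemma integral_monotone_convergence_le:
  fixes E :: "nat \<Rightarrow> 'a \<Rightarrow> real"
  assumes u: "u \<in> borel_measurable M" and E: "\<And>k. integrable M (E k)"
    and mono: "\<And>x. incseq (\<lambda>k. E k x)" and nonneg: "\<And>k x. 0 \<le> E k x"
    and lim: "\<And>x. (\<lambda>k. E k x) \<longlonglongrightarrow> u x"
    and bound: "\<And>k. integral\<^sup>L M (E k) \<le> J k" and J: "J \<longlonglongrightarrow> l"
  shows "integrable M u" and "integral\<^sup>L M u \<le> l"
proof -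
  have "convergent (\<lambda>k. integral\<^sup>L M (E k))"
  proof (rule Bseq_mono_convergent)
    obtain B where B: "\<And>k. norm (J k) \<le> B"
      using convergent_imp_Bseq[OF convergentI[OF J]] by (auto simp: Bseq_def)
    show "Bseq (\<lambda>k. integral\<^sup>L M (E k))"
    proof (rule BseqI')
      fix k
      have "0 \<le> integral\<^sup>L M (E k)"
        using nonneg by (intro Bochner_Integration.integral_nonneg) auto
      then show "norm (integral\<^sup>L M (E k)) \<le> B"
        using bound[of k] B[of k] by (simp add: abs_le_iff)
    qed
    show "\<forall>m n. m \<le> n \<longrightarrow> integral\<^sup>L M (E m) \<le> integral\<^sup>L M (E n)"
      using mono E by (auto intro: integral_mono simp: incseq_def)
  qed
  then obtain l' where l': "(\<lambda>k. integral\<^sup>L M (E k)) \<longlonglongrightarrow> l'"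
    by (auto simp: convergent_def)
  have "AE x in M. mono (\<lambda>k. E k x)"
    using mono by simp
  from integral_monotone_convergence_nonneg[OF E this AE_I2[OF nonneg] AE_I2[OF lim] l' u]
  have "integrable M u" "integral\<^sup>L M u = l'" by blast+
  moreover have "l' \<le> l"
    using bound by (intro LIMSEQ_le[OF l' J]) auto
  ultimately show "integrable M u" "integral\<^sup>L M u \<le> l" by auto
qed

lemma set_integral_lebesgue_eq_lborel:
  fixes f :: "'a::euclidean_space \<Rightarrow> real"
  assumes "f \<in> borel_measurable borel" "\<And>x. x \<notin> S \<Longrightarrow> f x = 0"
  shows "(LINT x:S|lebesgue. f x) = integral\<^sup>L lborel f"
proof -
  have "(LINT x:S|lebesgue. f x) = integral\<^sup>L lebesgue f"
    unfolding set_lebesgue_integral_def using assms(2)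
    by (intro Bochner_Integration.integral_cong) (auto simp: indicator_def)
  also have "\<dots> = integral\<^sup>L lborel f"
    by (rule integral_completion) (use assms(1) in simp)
  finally show ?thesis .
qed

definition zero_ext :: "'a set \<Rightarrow> ('a \<Rightarrow> 'b::zero) \<Rightarrow> 'a \<Rightarrow> 'b" where
  "zero_ext S h x = (if x \<in> S then h x else 0)"

lemma has_partial_derivative_zero_ext:
  assumes "open S" "y \<in> S" "has_partial_derivative h i y D"
  shows "has_partial_derivative (zero_ext S h) i y D"
  using assms(3,1,2) by (rule has_partial_derivative_transform_open) (simp add: zero_ext_def)

lemma continuous_on_zero_ext:
  assumes "open S" "closed K" "K \<subseteq> S" "continuous_on S h" "\<And>x. x \<in> S \<Longrightarrow> x \<notin> K \<Longrightarrow> h x = 0"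
  shows "continuous_on UNIV (zero_ext S h)"
proof -
  have "continuous_on (S \<union> - K) (zero_ext S h)"
  proof (rule continuous_on_open_Un)
    show "continuous_on S (zero_ext S h)"
      using assms(4) by (rule continuous_on_eq) (simp add: zero_ext_def)
    show "continuous_on (- K) (zero_ext S h)"
      by (rule continuous_on_eq[OF continuous_on_const[of _ 0]]) (use assms(5) in \<open>auto simp: zero_ext_def\<close>)
  qed (use assms(1,2) in auto)
  moreover have "S \<union> - K = UNIV" using assms(3) by auto
  ultimately show ?thesis by simp
qed

lemma integrable_zero_ext:
  fixes h :: "real^'n \<Rightarrow> real"
  assumes "open S" "compact K" "K \<subseteq> S" "continuous_on S h" "\<And>x. x \<in> S \<Longrightarrow> x \<notin> K \<Longrightarrow> h x = 0"
  shows "integrable lborel (zero_ext S h)"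
  using continuous_on_zero_ext[OF assms(1) compact_imp_closed[OF assms(2)] assms(3-5)] assms(2)
  by (rule integrable_continuous_compact_support) (use assms(3,5) in \<open>auto simp: zero_ext_def\<close>)

lemma borel_measurable_zero_ext:
  fixes h :: "'a::topological_space \<Rightarrow> 'b::{real_normed_vector,second_countable_topology}"
  assumes "open S" "continuous_on S h"
  shows "zero_ext S h \<in> borel_measurable borel"
  unfolding zero_ext_def[abs_def]
  by (rule borel_measurable_continuous_on_if) (use assms in auto)

lemma nn_integral_tendsto_0_dominated:
  fixes h :: "nat \<Rightarrow> 'a \<Rightarrow> real"
  assumes "\<And>k. h k \<in> borel_measurable M" "\<And>k x. 0 \<le> h k x" "\<And>k x. h k x \<le> H x"
    and "integrable M H" "\<And>x. (\<lambda>k. h k x) \<longlonglongrightarrow> 0"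
  shows "(\<lambda>k. \<integral>\<^sup>+ x. ennreal (h k x) \<partial>M) \<longlonglongrightarrow> 0"
proof -
  have bound: "AE x in M. norm (h k x) \<le> H x" for k
    using assms(2,3) by (intro AE_I2) simp
  have "(\<lambda>k. integral\<^sup>L M (h k)) \<longlonglongrightarrow> integral\<^sup>L M (\<lambda>x. 0)"
    by (rule integral_dominated_convergence[OF _ assms(1,4) _ bound]) (use assms(5) in auto)
  moreover have "(\<integral>\<^sup>+ x. ennreal (h k x) \<partial>M) = ennreal (integral\<^sup>L M (h k))" for k
  proof (rule nn_integral_eq_integral)
    show "integrable M (h k)"
      using assms(2,3) by (intro Bochner_Integration.integrable_bound[OF assms(4,1)] AE_I2)
        (metis abs_of_nonneg order_trans abs_ge_self real_norm_def)
  qed (use assms(2) in simp)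
  ultimately show ?thesis
    using tendsto_ennrealI[of "\<lambda>k. integral\<^sup>L M (h k)" 0] by simp
qed

section \<open>Approximations of the positive part\<close>

(* G_d: both (t - d)^2 / t and its derivative 1 - d^2 / t^2 vanish at t = d, so G_d is C^1. *)
definition pos_part_approx :: "real \<Rightarrow> real \<Rightarrow> real" where
  "pos_part_approx d t = (if t \<le> d then 0 else (t - d)\<^sup>2 / t)"

definition pos_part_approx_deriv :: "real \<Rightarrow> real \<Rightarrow> real" where
  "pos_part_approx_deriv d t = (if t \<le> d then 0 else 1 - d\<^sup>2 / t\<^sup>2)"

lemma pos_part_approx_eq_0 [simp]: "t \<le> d \<Longrightarrow> pos_part_approx d t = 0"
  and pos_part_approx_deriv_eq_0 [simp]: "t \<le> d \<Longrightarrow> pos_part_approx_deriv d t = 0"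
  by (simp_all add: pos_part_approx_def pos_part_approx_deriv_def)

lemma has_real_derivative_pos_part_approx:
  assumes "d > 0"
  shows "(pos_part_approx d has_real_derivative pos_part_approx_deriv d t) (at t)"
proof -
  have closures: "closure {..d} \<inter> closure {d<..} = {d}" by auto
  have branch: "((\<lambda>t. (t - d)\<^sup>2 / t) has_real_derivative 1 - d\<^sup>2 / t\<^sup>2) (at t)" if "t \<ge> d" for t
  proof -
    have "t \<noteq> 0" using that assms by auto
    then have "((\<lambda>t. (t - d)\<^sup>2 / t) has_real_derivative (2 * (t - d) * t - (t - d)\<^sup>2) / t\<^sup>2) (at t)"
      by (auto intro!: derivative_eq_intros simp: power2_eq_square)
    moreover have "(2 * (t - d) * t - (t - d)\<^sup>2) / t\<^sup>2 = 1 - d\<^sup>2 / t\<^sup>2"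
      using \<open>t \<noteq> 0\<close> by (simp add: field_simps power2_eq_square)
    ultimately show ?thesis by simp
  qed
  have "((\<lambda>t. if t \<in> {..d} then 0 else (t - d)\<^sup>2 / t) has_vector_derivative
      (if t \<in> {..d} then 0 else 1 - d\<^sup>2 / t\<^sup>2)) (at t within {..d} \<union> {d<..})"
  proof (rule has_vector_derivative_If_within_closures[where f' = "\<lambda>_. 0"])
    show "((\<lambda>t. (t - d)\<^sup>2 / t) has_vector_derivative 1 - d\<^sup>2 / t\<^sup>2)
        (at t within {d<..} \<union> (closure {..d} \<inter> closure {d<..}))"
      if "t \<in> {d<..} \<union> (closure {..d} \<inter> closure {d<..})"
      using that branch[of t] unfolding closures has_real_derivative_iff_has_vector_derivative[symmetric]
      by (auto intro: has_field_derivative_at_within)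
  qed (use assms in auto)
  moreover have "{..d} \<union> {d<..} = (UNIV :: real set)" by auto
  ultimately show ?thesis
    unfolding pos_part_approx_def[abs_def] pos_part_approx_deriv_def
    by (simp add: has_real_derivative_iff_has_vector_derivative)
qed

lemma continuous_on_pos_part_approx: "d > 0 \<Longrightarrow> continuous_on UNIV (pos_part_approx d)"
  using has_real_derivative_pos_part_approx
  by (meson DERIV_continuous continuous_at_imp_continuous_on)

lemma continuous_on_pos_part_approx_deriv:
  assumes "d > 0"
  shows "continuous_on UNIV (pos_part_approx_deriv d)"
proof -
  have "continuous_on ({..d} \<union> {d..}) (\<lambda>t. if t \<le> d then 0 else 1 - d\<^sup>2 / t\<^sup>2)"
    by (rule continuous_on_cases) (use assms in \<open>auto intro!: continuous_intros\<close>)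
  moreover have "{..d} \<union> {d..} = (UNIV :: real set)" by auto
  ultimately show ?thesis by (simp add: pos_part_approx_deriv_def[abs_def])
qed

lemma pos_part_approx_deriv_bounds: "d > 0 \<Longrightarrow> 0 \<le> pos_part_approx_deriv d t \<and> pos_part_approx_deriv d t \<le> 1"
  by (auto simp: pos_part_approx_deriv_def field_simps power2_eq_square intro: mult_mono)

lemma pos_part_approx_bounds:
  assumes "d > 0"
  shows "0 \<le> pos_part_approx d t" "pos_part_approx d t \<le> max t 0"
    and "\<bar>pos_part_approx d t - max t 0\<bar> \<le> 2 * d"
proof -
  have "0 \<le> pos_part_approx d t \<and> pos_part_approx d t \<le> max t 0
      \<and> \<bar>pos_part_approx d t - max t 0\<bar> \<le> 2 * d"
  proof (cases "t \<le> d")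
    case False
    then have "t > 0" using assms by simp
    have "max t 0 - pos_part_approx d t = (2 * t * d - d\<^sup>2) / t"
      using False \<open>t > 0\<close> by (simp add: pos_part_approx_def field_simps power2_eq_square)
    moreover have "0 \<le> (2 * t * d - d\<^sup>2) / t" "(2 * t * d - d\<^sup>2) / t \<le> 2 * d"
      using False assms \<open>t > 0\<close> by (simp_all add: field_simps power2_eq_square)
    ultimately show ?thesis using False \<open>t > 0\<close> by (auto simp: pos_part_approx_def)
  qed (use assms in \<open>auto simp: pos_part_approx_def\<close>)
  then show "0 \<le> pos_part_approx d t" "pos_part_approx d t \<le> max t 0"
    and "\<bar>pos_part_approx d t - max t 0\<bar> \<le> 2 * d" by auto
qed

lemma pos_part_approx_deriv_antimono:
  assumes "0 < d'" "d' \<le> d"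
  shows "pos_part_approx_deriv d t \<le> pos_part_approx_deriv d' t"
proof (cases "t \<le> d")
  case True
  then show ?thesis using pos_part_approx_deriv_bounds[of d' t] assms by (simp add: pos_part_approx_deriv_def)
next
  case False
  have "d'\<^sup>2 / t\<^sup>2 \<le> d\<^sup>2 / t\<^sup>2" using assms False by (intro divide_right_mono power_mono) auto
  then show ?thesis using False assms by (simp add: pos_part_approx_deriv_def)
qed

lemma pos_part_approx_tendsto:
  assumes "\<And>k. d k > 0" "d \<longlonglongrightarrow> 0"
  shows "(\<lambda>k. pos_part_approx (d k) t) \<longlonglongrightarrow> max t 0"
proof -
  have "(\<lambda>k. pos_part_approx (d k) t - max t 0) \<longlonglongrightarrow> 0"
  proof (rule tendsto_sandwich[where f = "\<lambda>k. - 2 * d k" and h = "\<lambda>k. 2 * d k"])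
    have "- 2 * d k \<le> pos_part_approx (d k) t - max t 0 \<and> pos_part_approx (d k) t - max t 0 \<le> 2 * d k"
      for k using pos_part_approx_bounds(3)[OF assms(1), of k t] by (auto simp: abs_le_iff)
    then show "\<forall>\<^sub>F k in sequentially. - 2 * d k \<le> pos_part_approx (d k) t - max t 0"
      and "\<forall>\<^sub>F k in sequentially. pos_part_approx (d k) t - max t 0 \<le> 2 * d k"
      by simp_all
  qed (use tendsto_mult_right_zero[OF assms(2), of "-2"] tendsto_mult_right_zero[OF assms(2), of 2] in auto)
  then show ?thesis by (simp add: LIM_zero_iff)
qed

lemma pos_part_approx_deriv_tendsto:
  assumes "\<And>k. d k > 0" "d \<longlonglongrightarrow> 0"
  shows "(\<lambda>k. pos_part_approx_deriv (d k) t) \<longlonglongrightarrow> (if t > 0 then 1 else 0)"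
proof (cases "t > 0")
  case True
  have "(\<lambda>k. 1 - (d k)\<^sup>2 / t\<^sup>2) \<longlonglongrightarrow> 1 - 0\<^sup>2 / t\<^sup>2"
    by (intro tendsto_intros assms(2)) (use True in simp)
  moreover have "\<forall>\<^sub>F k in sequentially. pos_part_approx_deriv (d k) t = 1 - (d k)\<^sup>2 / t\<^sup>2"
    using order_tendstoD(2)[OF assms(2) True]
    by eventually_elim (simp add: pos_part_approx_deriv_def)
  ultimately show ?thesis using True by (simp add: tendsto_cong)
next
  case False
  then have "pos_part_approx_deriv (d k) t = 0" for k
    using assms(1)[of k] by (simp add: pos_part_approx_deriv_def)
  then show ?thesis using False by simp
qed

section \<open>Subsolutions of a linear equation\<close>

lemma power2_norm_vec: "(norm (v::real^'n))\<^sup>2 = (\<Sum>i\<in>UNIV. (v$i)\<^sup>2)"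
  by (simp add: norm_vec_def L2_set_def sum_nonneg)

definition approx_level :: "nat \<Rightarrow> real" where
  "approx_level k = inverse (real (Suc k))"

lemma approx_level_pos: "approx_level k > 0"
  by (simp add: approx_level_def)

lemma approx_level_le_1: "approx_level k \<le> 1"
  by (simp add: approx_level_def inverse_le_1_iff)

lemma approx_level_antimono: "k \<le> k' \<Longrightarrow> approx_level k' \<le> approx_level k"
  by (simp add: approx_level_def)

lemma approx_level_tendsto: "approx_level \<longlonglongrightarrow> 0"
  unfolding approx_level_def[abs_def] by (rule LIMSEQ_inverse_real_of_nat)

locale Dirichlet_subsolution =
  fixes \<Omega> :: "(real^'n) set" and w a :: "real^'n \<Rightarrow> real"
  assumes open_domain: "open \<Omega>" and bounded_domain: "bounded \<Omega>"
    and continuous_on_closure: "continuous_on (closure \<Omega>) w"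
    and zero_on_frontier: "\<And>x. x \<in> frontier \<Omega> \<Longrightarrow> w x = 0"
    and C2: "C2_on \<Omega> w"
    and subsolution: "\<And>x. x \<in> \<Omega> \<Longrightarrow> - laplacian w x \<le> a x * w x"
    and continuous_coeff: "continuous_on \<Omega> a"
    and bounded_coeff: "bounded (a ` \<Omega>)"
begin

definition superlevel :: "real \<Rightarrow> (real^'n) set" where
  "superlevel d = {x \<in> closure \<Omega>. d \<le> w x}"

lemma continuous_on_w: "continuous_on \<Omega> w"
  using continuous_on_closure closure_subset by (rule continuous_on_subset)

lemma compact_superlevel: "compact (superlevel d)"
proof -
  have "closed (closure \<Omega> \<inter> w -` {d..})"
    by (rule continuous_closed_preimage[OF continuous_on_closure]) auto
  moreover have "bounded (superlevel d)"
    using bounded_domain by (rule bounded_subset[OF bounded_closure]) (auto simp: superlevel_def)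
  ultimately show ?thesis
    unfolding compact_eq_bounded_closed superlevel_def by (simp add: Int_def)
qed

lemma superlevel_subset: "d > 0 \<Longrightarrow> superlevel d \<subseteq> \<Omega>"
  using zero_on_frontier open_domain
  by (force simp: superlevel_def frontier_def interior_open)

lemma zero_ext_superlevel:
  fixes h :: "real^'n \<Rightarrow> real"
  assumes "d > 0" "continuous_on \<Omega> h" "\<And>x. x \<in> \<Omega> \<Longrightarrow> w x < d \<Longrightarrow> h x = 0"
  shows "continuous_on UNIV (zero_ext \<Omega> h)" "integrable lborel (zero_ext \<Omega> h)"
    and "\<And>x. x \<notin> superlevel d \<Longrightarrow> zero_ext \<Omega> h x = 0"
proof -
  have vanish: "h x = 0" if "x \<in> \<Omega>" "x \<notin> superlevel d" for x
    using that assms(3) closure_subset by (force simp: superlevel_def)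
  show "continuous_on UNIV (zero_ext \<Omega> h)"
    using compact_imp_closed[OF compact_superlevel] superlevel_subset[OF assms(1)] assms(2) vanish
    by (rule continuous_on_zero_ext[OF open_domain])
  show "integrable lborel (zero_ext \<Omega> h)"
    using compact_superlevel superlevel_subset[OF assms(1)] assms(2) vanish
    by (rule integrable_zero_ext[OF open_domain])
  show "zero_ext \<Omega> h x = 0" if "x \<notin> superlevel d" for x
    using vanish[OF _ that] by (simp add: zero_ext_def)
qed

lemma has_partial_derivative_w: "y \<in> \<Omega> \<Longrightarrow> has_partial_derivative w i y (partial w i y)"
  and has_partial_derivative_partial_w:
    "y \<in> \<Omega> \<Longrightarrow> has_partial_derivative (partial w i) j y (partial (partial w i) j y)"
  using C2_on_has_partial_derivative[OF C2] by blast+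

lemma continuous_on_partial_w: "continuous_on \<Omega> (partial w i)"
  and continuous_on_partial2_w: "continuous_on \<Omega> (partial (partial w i) j)"
  using C2 by (simp_all add: C2_on_def)

lemma continuous_on_grad_w: "continuous_on \<Omega> (grad w)"
  unfolding grad_def[abs_def] by (intro continuous_on_vec_lambda continuous_on_partial_w)

lemma continuous_on_laplacian_w: "continuous_on \<Omega> (laplacian w)"
  unfolding laplacian_def[abs_def] by (intro continuous_intros continuous_on_partial2_w)

lemma continuous_on_cutoff:
  assumes "d > 0"
  shows "continuous_on \<Omega> (\<lambda>x. pos_part_approx d (w x))"
    and "continuous_on \<Omega> (\<lambda>x. pos_part_approx_deriv d (w x))"
  using continuous_on_pos_part_approx[OF assms] continuous_on_pos_part_approx_deriv[OF assms]
  by (auto intro: continuous_on_compose2[OF _ continuous_on_w])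

lemma has_partial_derivative_cutoff:
  "d > 0 \<Longrightarrow> y \<in> \<Omega> \<Longrightarrow>
    has_partial_derivative (\<lambda>x. pos_part_approx d (w x)) i y (pos_part_approx_deriv d (w y) * partial w i y)"
  by (intro has_partial_derivative_compose has_real_derivative_pos_part_approx has_partial_derivative_w)

text \<open>\<open>G\<^sub>d(w)\<close> is supported in the compact set \<open>{w \<ge> d} \<subseteq> \<Omega>\<close>, so integrating by parts
  against it produces no boundary terms.\<close>

lemma integral_cutoff_grad_eq:
  assumes d: "d > 0"
  shows "integral\<^sup>L lborel (zero_ext \<Omega> (\<lambda>x. pos_part_approx_deriv d (w x) * (norm (grad w x))\<^sup>2))
       = integral\<^sup>L lborel (zero_ext \<Omega> (\<lambda>x. - laplacian w x * pos_part_approx d (w x)))"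
    (is "integral\<^sup>L lborel ?L = integral\<^sup>L lborel ?R")
proof -
  define F where "F i = zero_ext \<Omega> (\<lambda>x. pos_part_approx d (w x) * partial w i x)" for i
  define D where "D i = zero_ext \<Omega> (\<lambda>x. pos_part_approx_deriv d (w x) * (partial w i x)\<^sup>2
                                        + pos_part_approx d (w x) * partial (partial w i) i x)" for i
  note support = zero_ext_superlevel[OF d]
  have F: "continuous_on UNIV (F i)" "\<And>x. x \<notin> superlevel d \<Longrightarrow> F i x = 0" for i
    unfolding F_def using d
    by (intro support continuous_intros continuous_on_cutoff continuous_on_partial_w; simp)+
  have D: "continuous_on UNIV (D i)" "integrable lborel (D i)" for i
    unfolding D_def using d
    by (intro support continuous_intros continuous_on_cutoff continuous_on_partial_w
        continuous_on_partial2_w; simp)+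
  have "has_partial_derivative (F i) i y (D i y)" for i y
  proof (cases "y \<in> \<Omega>")
    case True
    then show ?thesis
      unfolding F_def D_def using has_partial_derivative_zero_ext[OF open_domain True
          has_partial_derivative_mult[OF has_partial_derivative_cutoff[OF d True]
            has_partial_derivative_partial_w[OF True]]]
      by (simp add: zero_ext_def power2_eq_square algebra_simps)
  next
    case False
    with superlevel_subset[OF d] have "y \<notin> superlevel d" by auto
    with has_partial_derivative_outside_support[OF compact_imp_closed[OF compact_superlevel] _ F(2)]
    show ?thesis using False by (simp add: D_def zero_ext_def)
  qed
  then have "integral\<^sup>L lborel (D i) = 0" for i
    using integral_partial_derivative_compact_support[OF F(1) D(1) compact_superlevel F(2)] by blast
  then have "integral\<^sup>L lborel (\<lambda>x. \<Sum>i\<in>UNIV. D i x) = 0"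
    using D(2) by (simp add: Bochner_Integration.integral_sum)
  moreover have "(\<lambda>x. \<Sum>i\<in>UNIV. D i x) = (\<lambda>x. ?L x - ?R x)"
    by (auto simp: D_def zero_ext_def laplacian_def grad_def power2_norm_vec sum.distrib
        sum_distrib_left sum_distrib_right algebra_simps)
  moreover have "integrable lborel ?L" "integrable lborel ?R"
    using d by (intro support continuous_intros continuous_on_cutoff continuous_on_grad_w
        continuous_on_laplacian_w; simp add: less_imp_le)+
  ultimately show ?thesis by simp
qed


lemma cutoff_energy_le:
  assumes d: "d > 0"
  shows "integral\<^sup>L lborel (zero_ext \<Omega> (\<lambda>x. pos_part_approx_deriv d (w x) * (norm (grad w x))\<^sup>2))
       \<le> integral\<^sup>L lborel (zero_ext \<Omega> (\<lambda>x. a x * w x * pos_part_approx d (w x)))"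
  unfolding integral_cutoff_grad_eq[OF d]
proof (rule integral_mono)
  show "integrable lborel (zero_ext \<Omega> (\<lambda>x. - laplacian w x * pos_part_approx d (w x)))"
    by (intro zero_ext_superlevel[OF d] continuous_intros continuous_on_cutoff[OF d]
        continuous_on_laplacian_w; simp add: less_imp_le)
  show "integrable lborel (zero_ext \<Omega> (\<lambda>x. a x * w x * pos_part_approx d (w x)))"
    by (intro zero_ext_superlevel[OF d] continuous_intros continuous_on_cutoff[OF d]
        continuous_coeff continuous_on_w; simp add: less_imp_le)
  show "zero_ext \<Omega> (\<lambda>x. - laplacian w x * pos_part_approx d (w x)) x
      \<le> zero_ext \<Omega> (\<lambda>x. a x * w x * pos_part_approx d (w x)) x" for x
  proof (cases "x \<in> \<Omega>")
    case True
    then show ?thesis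
      using mult_right_mono[OF subsolution[OF True] pos_part_approx_bounds(1)[OF d, of "w x"]]
      by (simp add: zero_ext_def)
  qed (simp add: zero_ext_def)
qed

lemma bounded_w: obtains W where "\<And>x. x \<in> \<Omega> \<Longrightarrow> \<bar>w x\<bar> \<le> W"
proof -
  have "bounded (w ` closure \<Omega>)"
    using bounded_domain continuous_on_closure
    by (intro compact_imp_bounded compact_continuous_image) auto
  then show ?thesis using closure_subset that by (force simp: bounded_iff)
qed

lemma tendsto_cutoff_energy_rhs:
  "(\<lambda>k. integral\<^sup>L lborel (zero_ext \<Omega> (\<lambda>x. a x * w x * pos_part_approx (approx_level k) (w x))))
     \<longlonglongrightarrow> integral\<^sup>L lborel (zero_ext \<Omega> (\<lambda>x. a x * (max (w x) 0)\<^sup>2))"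
proof -
  obtain W where W: "\<And>x. x \<in> \<Omega> \<Longrightarrow> \<bar>w x\<bar> \<le> W" using bounded_w by metis
  obtain A where A: "\<And>x. x \<in> \<Omega> \<Longrightarrow> \<bar>a x\<bar> \<le> A"
    using bounded_coeff by (auto simp: bounded_iff)
  note bounds = pos_part_approx_bounds[OF approx_level_pos]
  show ?thesis
  proof (rule integral_dominated_convergence[where w = "\<lambda>x. A * W\<^sup>2 * indicator \<Omega> x"])
    show "zero_ext \<Omega> (\<lambda>x. a x * (max (w x) 0)\<^sup>2) \<in> borel_measurable lborel"
      "zero_ext \<Omega> (\<lambda>x. a x * w x * pos_part_approx (approx_level k) (w x)) \<in> borel_measurable lborel" for k
      using approx_level_pos unfolding measurable_lborel2
      by (intro borel_measurable_zero_ext[OF open_domain] continuous_intros continuous_coeff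
          continuous_on_w continuous_on_cutoff)+
    show "integrable lborel (\<lambda>x. A * W\<^sup>2 * indicator \<Omega> x)"
      using open_domain emeasure_bounded_finite[OF bounded_domain]
      by (intro integrable_mult_right integrable_real_indicator) auto
    show "AE x in lborel. (\<lambda>k. zero_ext \<Omega> (\<lambda>x. a x * w x * pos_part_approx (approx_level k) (w x)) x)
        \<longlonglongrightarrow> zero_ext \<Omega> (\<lambda>x. a x * (max (w x) 0)\<^sup>2) x"
    proof (intro AE_I2)
      fix x
      have "(\<lambda>k. a x * w x * pos_part_approx (approx_level k) (w x)) \<longlonglongrightarrow> a x * w x * max (w x) 0"
        by (intro tendsto_intros pos_part_approx_tendsto approx_level_pos approx_level_tendsto)
      then show "(\<lambda>k. zero_ext \<Omega> (\<lambda>x. a x * w x * pos_part_approx (approx_level k) (w x)) x)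
          \<longlonglongrightarrow> zero_ext \<Omega> (\<lambda>x. a x * (max (w x) 0)\<^sup>2) x"
        by (cases "x \<in> \<Omega>") (auto simp: zero_ext_def max_def power2_eq_square mult.assoc)
    qed
    show "AE x in lborel. norm (zero_ext \<Omega> (\<lambda>x. a x * w x * pos_part_approx (approx_level k) (w x)) x)
        \<le> A * W\<^sup>2 * indicator \<Omega> x" for k
    proof (intro AE_I2)
      fix x
      show "norm (zero_ext \<Omega> (\<lambda>x. a x * w x * pos_part_approx (approx_level k) (w x)) x)
          \<le> A * W\<^sup>2 * indicator \<Omega> x"
      proof (cases "x \<in> \<Omega>")
        case True
        have wG: "\<bar>w x\<bar> * pos_part_approx (approx_level k) (w x) \<le> W * W"
          using W[OF True] bounds(1,2)[of k "w x"]
          by (intro mult_mono) (auto intro: order_trans[OF _ W[OF True]])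
        have "\<bar>a x\<bar> * (\<bar>w x\<bar> * pos_part_approx (approx_level k) (w x)) \<le> A * (W * W)"
          by (rule mult_mono[OF A[OF True] wG]) (use A[OF True] bounds(1)[of k "w x"] in auto)
        then show ?thesis
          using True bounds(1)[of k "w x"] by (simp add: zero_ext_def abs_mult power2_eq_square mult.assoc)
      qed (simp add: zero_ext_def)
    qed
  qed
qed

definition pos_set :: "(real^'n) set" where
  "pos_set = {x \<in> \<Omega>. 0 < w x}"

definition w_pos :: "real^'n \<Rightarrow> real" where
  "w_pos = zero_ext \<Omega> (\<lambda>x. max (w x) 0)"

definition grad_w_pos :: "real^'n \<Rightarrow> real^'n" where
  "grad_w_pos = zero_ext pos_set (grad w)"

lemma open_pos_set: "open pos_set"
proof -
  have "open (\<Omega> \<inter> w -` {0<..})"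
    by (rule continuous_open_preimage[OF continuous_on_w open_domain]) auto
  then show ?thesis by (simp add: pos_set_def Int_def)
qed

lemma pos_set_subset: "pos_set \<subseteq> \<Omega>"
  by (auto simp: pos_set_def)

lemma borel_measurable_grad_w_pos: "grad_w_pos \<in> borel_measurable borel"
  unfolding grad_w_pos_def using pos_set_subset
  by (intro borel_measurable_zero_ext open_pos_set continuous_on_subset[OF continuous_on_grad_w])

lemma energy_inequality:
  shows "integrable lborel (\<lambda>x. (norm (grad_w_pos x))\<^sup>2)"
    and "integral\<^sup>L lborel (\<lambda>x. (norm (grad_w_pos x))\<^sup>2)
         \<le> integral\<^sup>L lborel (zero_ext \<Omega> (\<lambda>x. a x * (max (w x) 0)\<^sup>2))"
proof -
  define E where "E k = zero_ext \<Omega> (\<lambda>x. pos_part_approx_deriv (approx_level k) (w x) * (norm (grad w x))\<^sup>2)" for k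
  have grad_sq_meas: "(\<lambda>x. (norm (grad_w_pos x))\<^sup>2) \<in> borel_measurable lborel"
    using borel_measurable_grad_w_pos by measurable
  have E_int: "integrable lborel (E k)" for k
    unfolding E_def
    by (intro zero_ext_superlevel[OF approx_level_pos[of k]] continuous_intros
        continuous_on_cutoff[OF approx_level_pos[of k]]
        continuous_on_grad_w; simp add: less_imp_le)
  have E_mono: "incseq (\<lambda>k. E k x)" for x
    by (auto simp: incseq_def E_def zero_ext_def intro!: mult_right_mono pos_part_approx_deriv_antimono
        approx_level_pos approx_level_antimono)
  have E_nonneg: "0 \<le> E k x" for k x
    using pos_part_approx_deriv_bounds[OF approx_level_pos] by (simp add: E_def zero_ext_def)
  have E_lim: "(\<lambda>k. E k x) \<longlonglongrightarrow> (norm (grad_w_pos x))\<^sup>2" for x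
  proof -
    have "(\<lambda>k. pos_part_approx_deriv (approx_level k) (w x) * (norm (grad w x))\<^sup>2)
        \<longlonglongrightarrow> (if w x > 0 then 1 else 0) * (norm (grad w x))\<^sup>2"
      by (intro tendsto_intros pos_part_approx_deriv_tendsto approx_level_pos approx_level_tendsto)
    then show ?thesis
      by (cases "x \<in> \<Omega>") (auto simp: E_def grad_w_pos_def pos_set_def zero_ext_def)
  qed
  have E_bound: "integral\<^sup>L lborel (E k)
      \<le> integral\<^sup>L lborel (zero_ext \<Omega> (\<lambda>x. a x * w x * pos_part_approx (approx_level k) (w x)))" for k
    unfolding E_def by (rule cutoff_energy_le[OF approx_level_pos])
  from integral_monotone_convergence_le[OF grad_sq_meas E_int E_mono E_nonneg E_lim E_bound
      tendsto_cutoff_energy_rhs]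
  show "integrable lborel (\<lambda>x. (norm (grad_w_pos x))\<^sup>2)"
    and "integral\<^sup>L lborel (\<lambda>x. (norm (grad_w_pos x))\<^sup>2)
         \<le> integral\<^sup>L lborel (zero_ext \<Omega> (\<lambda>x. a x * (max (w x) 0)\<^sup>2))" .
qed

definition w_approx :: "nat \<Rightarrow> real^'n \<Rightarrow> real" where
  "w_approx k = zero_ext \<Omega> (\<lambda>x. pos_part_approx (approx_level k) (w x))"

lemma w_approx_support:
  shows "continuous_on UNIV (w_approx k)" and "\<And>x. x \<notin> superlevel (approx_level k) \<Longrightarrow> w_approx k x = 0"
proof -
  have "pos_part_approx (approx_level k) (w x) = 0" if "w x < approx_level k" for x
    using that by simp
  from zero_ext_superlevel[OF approx_level_pos continuous_on_cutoff(1)[OF approx_level_pos] this]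
  show "continuous_on UNIV (w_approx k)" and "\<And>x. x \<notin> superlevel (approx_level k) \<Longrightarrow> w_approx k x = 0"
    unfolding w_approx_def by blast+
qed

lemma partial_w_approx:
  "partial (w_approx k) i = zero_ext \<Omega> (\<lambda>x. pos_part_approx_deriv (approx_level k) (w x) * partial w i x)"
proof
  fix y
  show "partial (w_approx k) i y = zero_ext \<Omega> (\<lambda>x. pos_part_approx_deriv (approx_level k) (w x) * partial w i x) y"
  proof (cases "y \<in> \<Omega>")
    case True
    have "has_partial_derivative (w_approx k) i y
        (pos_part_approx_deriv (approx_level k) (w y) * partial w i y)"
      unfolding w_approx_def
      by (rule has_partial_derivative_zero_ext[OF open_domain True
            has_partial_derivative_cutoff[OF approx_level_pos True]])
    then show ?thesis using True by (simp add: partial_eqI zero_ext_def)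
  next
    case False
    with superlevel_subset[OF approx_level_pos] have "y \<notin> superlevel (approx_level k)" by auto
    from has_partial_derivative_outside_support[OF compact_imp_closed[OF compact_superlevel] this
        w_approx_support(2)]
    show ?thesis using False by (simp add: partial_eqI zero_ext_def)
  qed
qed

lemma grad_w_approx:
  "grad (w_approx k) x = zero_ext \<Omega> (\<lambda>x. pos_part_approx_deriv (approx_level k) (w x) *\<^sub>R grad w x) x"
  by (simp add: grad_def partial_w_approx zero_ext_def vec_eq_iff)

lemma differentiable_w_approx: "w_approx k differentiable (at x)"
proof (cases "x \<in> \<Omega>")
  case True
  have "w differentiable (at x)"
    using has_derivative_continuous_partials[OF open_domain True has_partial_derivative_w
        continuous_on_partial_w]
    by (rule differentiableI)
  moreover have "pos_part_approx (approx_level k) differentiable (at (w x))"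
    using has_real_derivative_pos_part_approx[OF approx_level_pos]
    by (rule differentiableI[OF has_field_derivative_imp_has_derivative])
  ultimately have "(pos_part_approx (approx_level k) \<circ> w) differentiable (at x)"
    by (rule differentiable_chain_at)
  then obtain D where "((pos_part_approx (approx_level k) \<circ> w) has_derivative D) (at x)"
    by (auto simp: differentiable_def)
  then have "(w_approx k has_derivative D) (at x)"
    unfolding w_approx_def
    by (rule has_derivative_transform_within_open[OF _ open_domain True]) (simp add: zero_ext_def)
  then show ?thesis by (rule differentiableI)
next
  case False
  with superlevel_subset[OF approx_level_pos] have "x \<notin> superlevel (approx_level k)" by auto
  have "(w_approx k has_derivative (\<lambda>_. 0)) (at x)"
    by (rule has_derivative_transform_within_open[OF has_derivative_const[of 0]
          open_Compl[OF compact_imp_closed[OF compact_superlevel]]])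
      (use \<open>x \<notin> superlevel (approx_level k)\<close> w_approx_support(2) in auto)
  then show ?thesis by (rule differentiableI)
qed

lemma Cc1_w_approx: "Cc1 \<Omega> (w_approx k)"
  unfolding Cc1_def
proof (intro conjI allI)
  show "w_approx k differentiable (at x)" for x
    by (rule differentiable_w_approx)
  show "continuous_on UNIV (partial (w_approx k) i)" for i
    unfolding partial_w_approx
    by (intro zero_ext_superlevel[OF approx_level_pos[of k]] continuous_intros
        continuous_on_cutoff[OF approx_level_pos[of k]] continuous_on_partial_w; simp add: less_imp_le)
  have support: "closure {x. w_approx k x \<noteq> 0} \<subseteq> superlevel (approx_level k)"
    using w_approx_support(2) by (intro closure_minimal compact_imp_closed compact_superlevel) auto
  then have "closure {x. w_approx k x \<noteq> 0} = superlevel (approx_level k) \<inter> closure {x. w_approx k x \<noteq> 0}"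
    by blast
  then show "compact (closure {x. w_approx k x \<noteq> 0})"
    using compact_Int_closed[OF compact_superlevel closed_closure] by metis
  show "closure {x. w_approx k x \<noteq> 0} \<subseteq> \<Omega>"
    using support superlevel_subset[OF approx_level_pos] by blast
qed

lemma w_approx_L2_tendsto:
  "(\<lambda>k. \<integral>\<^sup>+ x. indicator \<Omega> x * ennreal ((w_approx k x - w_pos x)\<^sup>2) \<partial>lebesgue) \<longlonglongrightarrow> 0"
proof -
  have "(\<lambda>k. \<integral>\<^sup>+ x. ennreal ((w_approx k x - w_pos x)\<^sup>2) \<partial>lebesgue) \<longlonglongrightarrow> 0"
  proof (rule nn_integral_tendsto_0_dominated[where H = "\<lambda>x. 4 * indicator \<Omega> x"])
    have "w_pos \<in> borel_measurable borel"
      unfolding w_pos_def by (intro borel_measurable_zero_ext open_domain continuous_intros continuous_on_w)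
    then show "(\<lambda>x. (w_approx k x - w_pos x)\<^sup>2) \<in> borel_measurable lebesgue" for k
      using borel_measurable_continuous_onI[OF w_approx_support(1)[of k]]
      by (intro measurable_completion) simp
    show "integrable lebesgue (\<lambda>x. 4 * indicator \<Omega> x :: real)"
      using open_domain emeasure_bounded_finite[OF bounded_domain]
      by (intro integrable_mult_right integrable_real_indicator) (auto simp: emeasure_completion)
    show "(w_approx k x - w_pos x)\<^sup>2 \<le> 4 * indicator \<Omega> x" for k x
    proof (cases "x \<in> \<Omega>")
      case True
      have "\<bar>w_approx k x - w_pos x\<bar> \<le> 2"
        using pos_part_approx_bounds(3)[OF approx_level_pos, of k "w x"] approx_level_le_1[of k] True
        by (simp add: w_approx_def w_pos_def zero_ext_def)
      then show ?thesis using True by (simp add: abs_le_square_iff[of _ 2, simplified])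
    qed (simp add: w_approx_def w_pos_def zero_ext_def)
    show "(\<lambda>k. (w_approx k x - w_pos x)\<^sup>2) \<longlonglongrightarrow> 0" for x
    proof (cases "x \<in> \<Omega>")
      case True
      have "(\<lambda>k. (pos_part_approx (approx_level k) (w x) - max (w x) 0)\<^sup>2)
          \<longlonglongrightarrow> (max (w x) 0 - max (w x) 0)\<^sup>2"
        by (intro tendsto_intros pos_part_approx_tendsto approx_level_pos approx_level_tendsto)
      then show ?thesis using True by (simp add: w_approx_def w_pos_def zero_ext_def)
    qed (simp add: w_approx_def w_pos_def zero_ext_def)
  qed simp
  moreover have "(\<integral>\<^sup>+ x. indicator \<Omega> x * ennreal ((w_approx k x - w_pos x)\<^sup>2) \<partial>lebesgue)
      = (\<integral>\<^sup>+ x. ennreal ((w_approx k x - w_pos x)\<^sup>2) \<partial>lebesgue)" for k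
    by (intro nn_integral_cong) (simp add: indicator_def w_approx_def w_pos_def zero_ext_def)
  ultimately show ?thesis by simp
qed


lemma norm_grad_w_approx_diff:
  "(norm (grad (w_approx k) x - grad_w_pos x))\<^sup>2
     = zero_ext pos_set (\<lambda>x. (pos_part_approx_deriv (approx_level k) (w x) - 1)\<^sup>2 * (norm (grad w x))\<^sup>2) x"
proof (cases "x \<in> pos_set")
  case True
  then have "grad (w_approx k) x - grad_w_pos x
      = (pos_part_approx_deriv (approx_level k) (w x) - 1) *\<^sub>R grad w x"
    using pos_set_subset by (auto simp: grad_w_approx grad_w_pos_def zero_ext_def algebra_simps)
  then show ?thesis
    using True by (simp add: zero_ext_def power_mult_distrib)
next
  case False
  have "w x \<le> approx_level k" if "x \<in> \<Omega>"
    using False that approx_level_pos[of k] by (simp add: pos_set_def)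
  then show ?thesis
    using False by (simp add: grad_w_approx grad_w_pos_def zero_ext_def)
qed

lemma grad_w_approx_L2_tendsto:
  "(\<lambda>k. \<integral>\<^sup>+ x. indicator \<Omega> x * ennreal ((norm (grad (w_approx k) x - grad_w_pos x))\<^sup>2) \<partial>lebesgue)
     \<longlonglongrightarrow> 0"
proof -
  define h where "h k = zero_ext pos_set
      (\<lambda>x. (pos_part_approx_deriv (approx_level k) (w x) - 1)\<^sup>2 * (norm (grad w x))\<^sup>2)" for k
  have eq: "indicator \<Omega> x * ennreal ((norm (grad (w_approx k) x - grad_w_pos x))\<^sup>2) = ennreal (h k x)"
    for k x
    using pos_set_subset by (auto simp: norm_grad_w_approx_diff h_def indicator_def zero_ext_def)
  have "(\<lambda>k. \<integral>\<^sup>+ x. ennreal (h k x) \<partial>lebesgue) \<longlonglongrightarrow> 0"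
  proof (rule nn_integral_tendsto_0_dominated[where H = "\<lambda>x. (norm (grad_w_pos x))\<^sup>2"])
    show "h k \<in> borel_measurable lebesgue" for k
      unfolding h_def using pos_set_subset approx_level_pos[of k]
      by (intro measurable_completion, simp only: measurable_lborel2)
        (intro borel_measurable_zero_ext open_pos_set continuous_intros
          continuous_on_subset[OF continuous_on_cutoff(2)] continuous_on_subset[OF continuous_on_grad_w])
    show "integrable lebesgue (\<lambda>x. (norm (grad_w_pos x))\<^sup>2)"
      using energy_inequality(1) borel_measurable_grad_w_pos by (subst integrable_completion) auto
    show "0 \<le> h k x" for k x
      by (simp add: h_def zero_ext_def)
    show "h k x \<le> (norm (grad_w_pos x))\<^sup>2" for k x
    proof -
      have "(pos_part_approx_deriv (approx_level k) (w x) - 1)\<^sup>2 \<le> 1"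
        using power_le_one[of "1 - pos_part_approx_deriv (approx_level k) (w x)" 2]
          pos_part_approx_deriv_bounds[OF approx_level_pos, of k "w x"]
        by (simp add: power2_commute)
      then show ?thesis
        by (simp add: h_def grad_w_pos_def zero_ext_def mult_left_le_one_le)
    qed
    show "(\<lambda>k. h k x) \<longlonglongrightarrow> 0" for x
    proof (cases "x \<in> pos_set")
      case True
      have "(\<lambda>k. (pos_part_approx_deriv (approx_level k) (w x) - 1)\<^sup>2 * (norm (grad w x))\<^sup>2)
          \<longlonglongrightarrow> ((if w x > 0 then 1 else 0) - 1)\<^sup>2 * (norm (grad w x))\<^sup>2"
        by (intro tendsto_intros pos_part_approx_deriv_tendsto approx_level_pos approx_level_tendsto)
      then show ?thesis using True by (simp add: h_def zero_ext_def pos_set_def)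
    qed (simp add: h_def zero_ext_def)
  qed
  then show ?thesis by (simp only: eq)
qed

lemma H10_w_pos: "H10 \<Omega> w_pos grad_w_pos"
  unfolding H10_def
proof (intro conjI exI[of _ w_approx] allI Cc1_w_approx w_approx_L2_tendsto grad_w_approx_L2_tendsto)
  show "w_pos \<in> borel_measurable lebesgue"
    unfolding w_pos_def
    by (intro measurable_completion, simp only: measurable_lborel2)
      (intro borel_measurable_zero_ext open_domain continuous_intros continuous_on_w)
  show "grad_w_pos \<in> borel_measurable lebesgue"
    using borel_measurable_grad_w_pos by (intro measurable_completion) simp
qed

lemma nonpos_if_stable:
  assumes stable: "\<And>\<phi> g. H10 \<Omega> \<phi> g \<Longrightarrow> \<not> (AE x in lebesgue. x \<in> \<Omega> \<longrightarrow> \<phi> x = 0) \<Longrightarrow>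
      (LINT x:\<Omega>|lebesgue. (norm (g x))\<^sup>2) - (LINT x:\<Omega>|lebesgue. a x * (\<phi> x)\<^sup>2) > 0"
    and "x \<in> \<Omega>"
  shows "w x \<le> 0"
proof (rule ccontr)
  assume "\<not> w x \<le> 0"
  with \<open>x \<in> \<Omega>\<close> have "x \<in> pos_set" by (simp add: pos_set_def)
  have "(\<lambda>y. (norm (grad_w_pos y))\<^sup>2) \<in> borel_measurable borel"
    using borel_measurable_grad_w_pos by measurable
  then have "(LINT y:\<Omega>|lebesgue. (norm (grad_w_pos y))\<^sup>2) = integral\<^sup>L lborel (\<lambda>y. (norm (grad_w_pos y))\<^sup>2)"
    by (rule set_integral_lebesgue_eq_lborel)
      (use pos_set_subset in \<open>auto simp: grad_w_pos_def zero_ext_def\<close>)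
  moreover have "(LINT y:\<Omega>|lebesgue. a y * (w_pos y)\<^sup>2)
      = integral\<^sup>L lborel (zero_ext \<Omega> (\<lambda>y. a y * (max (w y) 0)\<^sup>2))"
  proof -
    have "(\<lambda>y. a y * (w_pos y)\<^sup>2) = zero_ext \<Omega> (\<lambda>y. a y * (max (w y) 0)\<^sup>2)"
      by (auto simp: w_pos_def zero_ext_def)
    moreover have "zero_ext \<Omega> (\<lambda>y. a y * (max (w y) 0)\<^sup>2) \<in> borel_measurable borel"
      by (intro borel_measurable_zero_ext open_domain continuous_intros continuous_coeff continuous_on_w)
    ultimately show ?thesis
      by (simp add: set_integral_lebesgue_eq_lborel zero_ext_def)
  qed
  ultimately have "AE y in lebesgue. y \<in> \<Omega> \<longrightarrow> w_pos y = 0"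
    using stable[OF H10_w_pos] energy_inequality(2) by fastforce
  then have "AE y in lebesgue. y \<notin> pos_set"
    by eventually_elim (auto simp: pos_set_def w_pos_def zero_ext_def)
  moreover have "pos_set \<in> sets lebesgue"
    using open_pos_set by (intro sets_completionI_sets) simp
  ultimately have "pos_set \<in> null_sets lebesgue"
    by (simp add: AE_iff_measurable null_sets_def)
  then have "negligible pos_set" by (simp add: negligible_iff_null_sets)
  moreover have "\<not> negligible pos_set"
    using open_not_negligible[OF open_pos_set] \<open>x \<in> pos_set\<close> by auto
  ultimately show False by simp
qed

end

lemma has_real_derivative_snd:
  fixes g :: "'a::real_normed_vector \<times> real \<Rightarrow> real"
  assumes "(g has_derivative D) (at (x, t))"
  shows "((\<lambda>s. g (x, s)) has_real_derivative D (0, 1)) (at t)"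
proof -
  interpret D: bounded_linear D by (rule has_derivative_bounded_linear[OF assms])
  have "((\<lambda>s. g (x, s)) has_derivative (\<lambda>h. D (0, h))) (at t)"
    using has_derivative_compose[OF has_derivative_Pair[OF has_derivative_const has_derivative_ident] assms]
    by simp
  moreover have "(\<lambda>h. D (0, h)) = (*) (D (0, 1))"
  proof
    fix h :: real
    have "D (0, h) = h * D (0, 1)"
      using D.scaleR[of h "(0, 1)"] by simp
    then show "D (0, h) = D (0, 1) * h" by (metis mult.commute)
  qed
  ultimately show ?thesis
    unfolding has_field_derivative_def by simp
qed

lemma C11_nonlin_fu:
  fixes f :: "real^'n \<Rightarrow> real \<Rightarrow> real"
  assumes "C11_nonlin S f"
  shows "\<And>x t. x \<in> S \<Longrightarrow> ((\<lambda>s. f x s) has_real_derivative fu f x t) (at t)"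
    and "\<exists>L. lipschitz_on L (S \<times> {-M..M}) (\<lambda>p. fu f (fst p) (snd p))"
proof -
  obtain Df where Df: "\<And>p. p \<in> S \<times> UNIV \<Longrightarrow> ((\<lambda>q. f (fst q) (snd q)) has_derivative Df p) (at p)"
    and Lip: "\<forall>M. \<exists>L. \<forall>p \<in> S \<times> {-M..M}. \<forall>q \<in> S \<times> {-M..M}. onorm (\<lambda>h. Df p h - Df q h) \<le> L * dist p q"
    using assms unfolding C11_nonlin_def by blast
  obtain L where L: "\<forall>p \<in> S \<times> {-M..M}. \<forall>q \<in> S \<times> {-M..M}. onorm (\<lambda>h. Df p h - Df q h) \<le> L * dist p q"
    using Lip by blast
  have deriv: "((\<lambda>s. f x s) has_real_derivative Df (x, t) (0, 1)) (at t)" if "x \<in> S" for x t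
    using has_real_derivative_snd[OF Df[of "(x, t)"]] that by simp
  have fu_eq: "fu f x t = Df (x, t) (0, 1)" if "x \<in> S" for x t
    unfolding fu_def by (rule DERIV_imp_deriv[OF deriv[OF that]])
  show "((\<lambda>s. f x s) has_real_derivative fu f x t) (at t)" if "x \<in> S" for x t
    unfolding fu_eq[OF that] by (rule deriv[OF that])
  have "\<bar>fu f (fst p) (snd p) - fu f (fst q) (snd q)\<bar> \<le> \<bar>L\<bar> * dist p q"
    if p: "p \<in> S \<times> {-M..M}" and q: "q \<in> S \<times> {-M..M}" for p q
  proof -
    have "bounded_linear (\<lambda>h. Df p h - Df q h)"
      using Df p q by (intro bounded_linear_sub has_derivative_bounded_linear) auto
    from onorm[OF this, of "(0, 1)"]
    have "norm (Df p (0, 1) - Df q (0, 1)) \<le> onorm (\<lambda>h. Df p h - Df q h) * norm (0 :: real^'n, 1 :: real)"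
      by simp
    also have "\<dots> = onorm (\<lambda>h. Df p h - Df q h)"
      by (simp add: norm_Pair)
    also have "\<dots> \<le> L * dist p q"
      using L p q by blast
    also have "\<dots> \<le> \<bar>L\<bar> * dist p q"
      by (simp add: mult_right_mono)
    finally show ?thesis
      using p q fu_eq[of "fst p" "snd p"] fu_eq[of "fst q" "snd q"] by auto
  qed
  then show "\<exists>L. lipschitz_on L (S \<times> {-M..M}) (\<lambda>p. fu f (fst p) (snd p))"
    by (intro exI[of _ "\<bar>L\<bar>"] lipschitz_onI) (auto simp: dist_real_def)
qed

lemma lipschitz_on_bounded_image:
  assumes "lipschitz_on L U g" "bounded U"
  shows "bounded (g ` U)"
proof (cases "U = {}")
  case False
  then obtain p0 where "p0 \<in> U" by blast
  obtain e where e: "\<And>p. p \<in> U \<Longrightarrow> dist p0 p \<le> e"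
    using assms(2) bounded_any_center by metis
  have "dist (g p0) (g p) \<le> L * e" if "p \<in> U" for p
    using lipschitz_onD[OF assms(1) \<open>p0 \<in> U\<close> that] e[OF that] lipschitz_on_nonneg[OF assms(1)]
    by (meson mult_left_mono order_trans)
  then show ?thesis
    unfolding bounded_any_center[of _ "g p0"] by blast
qed simp

lemma C11_nonlin_linearization_coefficient:
  fixes f :: "real^'n \<Rightarrow> real \<Rightarrow> real"
  assumes f: "C11_nonlin S f" and S: "bounded S" and u: "continuous_on S u" "bounded (u ` S)"
  shows "continuous_on S (\<lambda>x. fu f x (u x))" and "bounded ((\<lambda>x. fu f x (u x)) ` S)"
proof -
  obtain M where M: "\<And>x. x \<in> S \<Longrightarrow> \<bar>u x\<bar> \<le> M"
    using u(2) by (auto simp: bounded_iff)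
  obtain L where L: "lipschitz_on L (S \<times> {-M..M}) (\<lambda>p. fu f (fst p) (snd p))"
    using C11_nonlin_fu(2)[OF f] by blast
  have graph: "(x, u x) \<in> S \<times> {-M..M}" if "x \<in> S" for x
    using M[OF that] that by auto
  have "continuous_on S (\<lambda>x. (x, u x))"
    using u(1) by (intro continuous_intros)
  then show "continuous_on S (\<lambda>x. fu f x (u x))"
    by (rule continuous_on_compose2[OF lipschitz_on_continuous_on[OF L], where f = "\<lambda>x. (x, u x)",
          simplified]) (use graph in auto)
  have "(\<lambda>x. fu f x (u x)) ` S \<subseteq> (\<lambda>p. fu f (fst p) (snd p)) ` (S \<times> {-M..M})"
    using graph by (fastforce simp: image_iff)
  then show "bounded ((\<lambda>x. fu f x (u x)) ` S)"
    using lipschitz_on_bounded_image[OF L bounded_Times[OF S bounded_closed_interval]]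
    by (rule bounded_subset[rotated])
qed

lemma convex_solutions_diff_subsolution:
  fixes f :: "real^'n \<Rightarrow> real \<Rightarrow> real"
  assumes "open \<Omega>" and f: "C11_nonlin \<Omega> f" "\<forall>x\<in>\<Omega>. convex_on UNIV (\<lambda>t. f x t)"
    and u: "is_solution \<Omega> f u" and v: "is_solution \<Omega> f v" and x: "x \<in> \<Omega>"
  shows "- laplacian (\<lambda>x. u x - v x) x \<le> fu f x (u x) * (u x - v x)"
proof -
  have "f x (v x) - f x (u x) \<ge> fu f x (u x) * (v x - u x)"
    by (rule convex_on_imp_above_tangent[where A = UNIV])
      (use f x in \<open>auto intro: has_field_derivative_at_within C11_nonlin_fu(1)\<close>)
  moreover have "- laplacian u x = f x (u x)" "- laplacian v x = f x (v x)"
    using u v x by (auto simp: is_solution_def)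
  moreover have "laplacian (\<lambda>x. u x - v x) x = laplacian u x - laplacian v x"
    using C2_on_diff(2)[OF \<open>open \<Omega>\<close> _ _ x] u v by (simp add: is_solution_def)
  ultimately show ?thesis by (simp add: algebra_simps)
qed

lemma solution_le_if_stable:
  fixes f :: "real^'n \<Rightarrow> real \<Rightarrow> real"
  assumes \<Omega>: "open \<Omega>" "bounded \<Omega>" and f: "C11_nonlin \<Omega> f" "\<forall>x\<in>\<Omega>. convex_on UNIV (\<lambda>t. f x t)"
    and u: "is_solution \<Omega> f u" "stable \<Omega> f u" and v: "is_solution \<Omega> f v"
    and "x \<in> \<Omega>"
  shows "u x \<le> v x"
proof -
  have u_closure: "continuous_on (closure \<Omega>) u" and v_closure: "continuous_on (closure \<Omega>) v"
    using u(1) v(1) by (simp_all add: is_solution_def)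
  have "bounded (u ` \<Omega>)"
    using compact_continuous_image[OF u_closure] \<Omega>(2) closure_subset
    by (meson bounded_subset compact_closure compact_imp_bounded image_mono)
  then interpret Dirichlet_subsolution \<Omega> "\<lambda>x. u x - v x" "\<lambda>x. fu f x (u x)"
    using \<Omega> u(1) v(1) u_closure v_closure
    by unfold_locales (auto simp: is_solution_def intro!: continuous_intros C2_on_diff(1)
        C11_nonlin_linearization_coefficient[OF f(1)] convex_solutions_diff_subsolution[OF _ f]
        elim: continuous_on_subset[OF _ closure_subset])
  have "u x - v x \<le> 0"
    using u(2) \<open>x \<in> \<Omega>\<close> unfolding stable_def by (intro nonpos_if_stable) auto
  then show ?thesis by simp
qed

theorem lemma3p1:
  fixes \<Omega> :: "(real^'n) set" and k :: 'n
    and f :: "real^'n \<Rightarrow> real \<Rightarrow> real" and u v :: "real^'n \<Rightarrow> real"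
  assumes "CARD('n) \<ge> 3"
    and "open \<Omega>" and "connected \<Omega>" and "\<Omega> \<noteq> {}" and "bounded \<Omega>"
    and "simple_rot_sym k \<Omega>"
    and "C11_nonlin \<Omega> f"
    and "\<forall>x\<in>\<Omega>. convex_on UNIV (\<lambda>t. f x t)"
    and "is_solution \<Omega> f u" and "\<forall>x\<in>\<Omega>. u x > 0" and "stable \<Omega> f u"
    and "is_solution \<Omega> f v" and "\<forall>x\<in>\<Omega>. v x > 0" and "stable \<Omega> f v"
  shows "\<forall>x\<in>\<Omega>. u x = v x"
proof
  fix x assume "x \<in> \<Omega>"
  show "u x = v x"
    using solution_le_if_stable[OF assms(2,5,7,8) assms(9,11,12) \<open>x \<in> \<Omega>\<close>]
      solution_le_if_stable[OF assms(2,5,7,8) assms(12,14,9) \<open>x \<in> \<Omega>\<close>] by simp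
qed

end
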